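(* Let $\mathcal C$ be an $R$-coring satisfying the left $\alpha$-condition. (i) If $M$ is a left $\mathcal C$-comodule that is finitely generated and projective as a left $R$-module, then ${}^*M$ is a rational right ${}^*\mathcal C$-module. (ii) Suppose $\mathcal C=M\oplus N$ as left $\mathcal C$-comodules. Then ${}^*M$ is a rational right ${}^*\mathcal C$-module if and only if $M$ is finitely generated as a left $R$-module.
   Context: An $R$-coring is a triple $(\mathcal C,\Delta,\varepsilon)$ with $\mathcal C$ an $R$-bimodule and $\Delta:\mathcal C\to\mathcal C\otimes_R\mathcal C$, $\varepsilon:\mathcal C\to R$ coassociative and counital $R$-bimodule maps; write $\Delta(c)=c_{(1)}\otimes_R c_{(2)}$. ${}^*\mathcal C={}_R\mathrm{Hom}(\mathcal C,R)$ is a ring with product $(f\#g)(c)=g(c_{(1)}f(c_{(2)}))$ and unit $\varepsilon$. $\mathcal C$ satisfies the left $\alpha$-condition if it is locally projective as a left $R$-module. A left $\mathcal C$-comodule is a left $R$-module $M$ with a coassociative counital left $R$-linear map $M\to\mathcal C\otimes_R M$, $m\mapsto m_{[-1]}\otimes m_{[0]}$. For a left comodule $M$, ${}^*M={}_R\mathrm{Hom}(M,R)$ is a right ${}^*\mathcal C$-module via $(h\cdot f)(m)=f(m_{[-1]}h(m_{[0]}))$. A right ${}^*\mathcal C$-module $X$ is rational if for every $x\in X$ there is $\sum_i x_i\otimes c_i\in X\otimes_R\mathcal C$ with $x\cdot f=\sum_i x_if(c_i)$ for all $f\in{}^*\mathcal C$. *)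

theory Defs
  imports "HOL-Library.Function_Algebras"
begin

definition lmod :: "('r::ring_1 \<Rightarrow> 'm::ab_group_add \<Rightarrow> 'm) \<Rightarrow> bool" where
  "lmod lm \<longleftrightarrow> (\<forall>r s x y. lm r (x + y) = lm r x + lm r y \<and> lm (r + s) x = lm r x + lm s x
      \<and> lm (r * s) x = lm r (lm s x) \<and> lm 1 x = x)"

definition rmod :: "('m::ab_group_add \<Rightarrow> 'r::ring_1 \<Rightarrow> 'm) \<Rightarrow> bool" where
  "rmod rm \<longleftrightarrow> (\<forall>r s x y. rm (x + y) r = rm x r + rm y r \<and> rm x (r + s) = rm x r + rm x s
      \<and> rm x (r * s) = rm (rm x r) s \<and> rm x 1 = x)"

definition bimod :: "('r::ring_1 \<Rightarrow> 'm::ab_group_add \<Rightarrow> 'm) \<Rightarrow> ('m \<Rightarrow> 'r \<Rightarrow> 'm) \<Rightarrow> bool" where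
  "bimod lm rm \<longleftrightarrow> lmod lm \<and> rmod rm \<and> (\<forall>r s x. lm r (rm x s) = rm (lm r x) s)"

definition delta :: "'p \<Rightarrow> 'p \<Rightarrow> int" where
  "delta p = (\<lambda>q. if q = p then 1 else 0)"

text \<open>A formal sum of simple tensors, represented as a list, as an element of the free abelian group.\<close>
definition fsum :: "'p list \<Rightarrow> 'p \<Rightarrow> int" where
  "fsum xs = (\<lambda>q. \<Sum>p\<leftarrow>xs. delta p q)"

text \<open>Kernel of the free abelian group on A x B onto A tensor_R B (A right, B left R-module).\<close>
inductive_set tker :: "('a::ab_group_add \<Rightarrow> 'r::ring_1 \<Rightarrow> 'a) \<Rightarrow> ('r \<Rightarrow> 'b::ab_group_add \<Rightarrow> 'b)
    \<Rightarrow> ('a \<times> 'b \<Rightarrow> int) set"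
  for ra lb where
  tk_zero: "(\<lambda>_. 0) \<in> tker ra lb"
| tk_addl: "(\<lambda>q. delta (a + a', b) q - delta (a, b) q - delta (a', b) q) \<in> tker ra lb"
| tk_addr: "(\<lambda>q. delta (a, b + b') q - delta (a, b) q - delta (a, b') q) \<in> tker ra lb"
| tk_bal: "(\<lambda>q. delta (ra a r, b) q - delta (a, lb r b) q) \<in> tker ra lb"
| tk_diff: "x \<in> tker ra lb \<Longrightarrow> y \<in> tker ra lb \<Longrightarrow> (\<lambda>q. x q - y q) \<in> tker ra lb"

text \<open>Equality in A tensor_R B of two formal sums.\<close>
definition teq :: "('a::ab_group_add \<Rightarrow> 'r::ring_1 \<Rightarrow> 'a) \<Rightarrow> ('r \<Rightarrow> 'b::ab_group_add \<Rightarrow> 'b)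
    \<Rightarrow> ('a \<times> 'b) list \<Rightarrow> ('a \<times> 'b) list \<Rightarrow> bool" where
  "teq ra lb xs ys \<longleftrightarrow> (\<lambda>q. fsum xs q - fsum ys q) \<in> tker ra lb"

text \<open>Kernel for the triple tensor product A tensor_R B tensor_R D
  (A right module, B bimodule, D left module).\<close>
inductive_set tker3 :: "('a::ab_group_add \<Rightarrow> 'r::ring_1 \<Rightarrow> 'a) \<Rightarrow> ('r \<Rightarrow> 'b::ab_group_add \<Rightarrow> 'b)
    \<Rightarrow> ('b \<Rightarrow> 'r \<Rightarrow> 'b) \<Rightarrow> ('r \<Rightarrow> 'd::ab_group_add \<Rightarrow> 'd) \<Rightarrow> ('a \<times> 'b \<times> 'd \<Rightarrow> int) set"
  for ra lb rb ld where
  tk3_zero: "(\<lambda>_. 0) \<in> tker3 ra lb rb ld"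
| tk3_add1: "(\<lambda>q. delta (a + a', b, d) q - delta (a, b, d) q - delta (a', b, d) q) \<in> tker3 ra lb rb ld"
| tk3_add2: "(\<lambda>q. delta (a, b + b', d) q - delta (a, b, d) q - delta (a, b', d) q) \<in> tker3 ra lb rb ld"
| tk3_add3: "(\<lambda>q. delta (a, b, d + d') q - delta (a, b, d) q - delta (a, b, d') q) \<in> tker3 ra lb rb ld"
| tk3_bal1: "(\<lambda>q. delta (ra a r, b, d) q - delta (a, lb r b, d) q) \<in> tker3 ra lb rb ld"
| tk3_bal2: "(\<lambda>q. delta (a, rb b r, d) q - delta (a, b, ld r d) q) \<in> tker3 ra lb rb ld"
| tk3_diff: "x \<in> tker3 ra lb rb ld \<Longrightarrow> y \<in> tker3 ra lb rb ld \<Longrightarrow> (\<lambda>q. x q - y q) \<in> tker3 ra lb rb ld"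

definition teq3 :: "('a::ab_group_add \<Rightarrow> 'r::ring_1 \<Rightarrow> 'a) \<Rightarrow> ('r \<Rightarrow> 'b::ab_group_add \<Rightarrow> 'b)
    \<Rightarrow> ('b \<Rightarrow> 'r \<Rightarrow> 'b) \<Rightarrow> ('r \<Rightarrow> 'd::ab_group_add \<Rightarrow> 'd)
    \<Rightarrow> ('a \<times> 'b \<times> 'd) list \<Rightarrow> ('a \<times> 'b \<times> 'd) list \<Rightarrow> bool" where
  "teq3 ra lb rb ld xs ys \<longleftrightarrow> (\<lambda>q. fsum xs q - fsum ys q) \<in> tker3 ra lb rb ld"

text \<open>An R-coring on the bimodule (C, lc, rc): comultiplication Delta (each Delta c is a
  representative in C tensor_R C) and counit eps.\<close>
definition coring :: "('r::ring_1 \<Rightarrow> 'c::ab_group_add \<Rightarrow> 'c) \<Rightarrow> ('c \<Rightarrow> 'r \<Rightarrow> 'c)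
    \<Rightarrow> ('c \<Rightarrow> ('c \<times> 'c) list) \<Rightarrow> ('c \<Rightarrow> 'r) \<Rightarrow> bool" where
  "coring lc rc Delta eps \<longleftrightarrow> bimod lc rc
    \<and> (\<forall>x y. teq rc lc (Delta (x + y)) (Delta x @ Delta y))
    \<and> (\<forall>r x. teq rc lc (Delta (lc r x)) (map (\<lambda>(a, b). (lc r a, b)) (Delta x)))
    \<and> (\<forall>r x. teq rc lc (Delta (rc x r)) (map (\<lambda>(a, b). (a, rc b r)) (Delta x)))
    \<and> (\<forall>x y. eps (x + y) = eps x + eps y)
    \<and> (\<forall>r x. eps (lc r x) = r * eps x)
    \<and> (\<forall>r x. eps (rc x r) = eps x * r)
    \<and> (\<forall>x. teq3 rc lc rc lc
          (concat (map (\<lambda>(a, b). map (\<lambda>(u, v). (u, v, b)) (Delta a)) (Delta x)))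
          (concat (map (\<lambda>(a, b). map (\<lambda>(u, v). (a, u, v)) (Delta b)) (Delta x))))
    \<and> (\<forall>x. (\<Sum>(a, b)\<leftarrow>Delta x. lc (eps a) b) = x)
    \<and> (\<forall>x. (\<Sum>(a, b)\<leftarrow>Delta x. rc a (eps b)) = x)"

text \<open>A left comodule (M, lm) with coaction rho (each rho m a representative in C tensor_R M).\<close>
definition left_comodule :: "('r::ring_1 \<Rightarrow> 'c::ab_group_add \<Rightarrow> 'c) \<Rightarrow> ('c \<Rightarrow> 'r \<Rightarrow> 'c)
    \<Rightarrow> ('c \<Rightarrow> ('c \<times> 'c) list) \<Rightarrow> ('c \<Rightarrow> 'r)
    \<Rightarrow> ('r \<Rightarrow> 'm::ab_group_add \<Rightarrow> 'm) \<Rightarrow> ('m \<Rightarrow> ('c \<times> 'm) list) \<Rightarrow> bool" where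
  "left_comodule lc rc Delta eps lm rho \<longleftrightarrow> lmod lm
    \<and> (\<forall>x y. teq rc lm (rho (x + y)) (rho x @ rho y))
    \<and> (\<forall>r x. teq rc lm (rho (lm r x)) (map (\<lambda>(c, m). (lc r c, m)) (rho x)))
    \<and> (\<forall>x. teq3 rc lc rc lm
          (concat (map (\<lambda>(c, m). map (\<lambda>(u, v). (u, v, m)) (Delta c)) (rho x)))
          (concat (map (\<lambda>(c, m). map (\<lambda>(u, v). (c, u, v)) (rho m)) (rho x))))
    \<and> (\<forall>x. (\<Sum>(c, m)\<leftarrow>rho x. lm (eps c) m) = x)"

definition comodule_map_to_C :: "('r::ring_1 \<Rightarrow> 'c::ab_group_add \<Rightarrow> 'c) \<Rightarrow> ('c \<Rightarrow> 'r \<Rightarrow> 'c)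
    \<Rightarrow> ('c \<Rightarrow> ('c \<times> 'c) list) \<Rightarrow> ('r \<Rightarrow> 'm::ab_group_add \<Rightarrow> 'm) \<Rightarrow> ('m \<Rightarrow> ('c \<times> 'm) list)
    \<Rightarrow> ('m \<Rightarrow> 'c) \<Rightarrow> bool" where
  "comodule_map_to_C lc rc Delta lm rho g \<longleftrightarrow>
     (\<forall>x y. g (x + y) = g x + g y) \<and> (\<forall>r x. g (lm r x) = lc r (g x))
     \<and> (\<forall>x. teq rc lc (Delta (g x)) (map (\<lambda>(c, m). (c, g m)) (rho x)))"

text \<open>*M = Hom_R(M, R) for a left R-module M.\<close>
definition ldual :: "('r::ring_1 \<Rightarrow> 'm::ab_group_add \<Rightarrow> 'm) \<Rightarrow> ('m \<Rightarrow> 'r) set" where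
  "ldual lm = {h. (\<forall>x y. h (x + y) = h x + h y) \<and> (\<forall>r x. h (lm r x) = r * h x)}"

text \<open>Right *C-action on *M: (h . f)(m) = f(m_[-1] h(m_[0])).\<close>
definition dual_act :: "('c \<Rightarrow> 'r::ring_1 \<Rightarrow> 'c) \<Rightarrow> ('m \<Rightarrow> ('c \<times> 'm) list)
    \<Rightarrow> ('m \<Rightarrow> 'r) \<Rightarrow> ('c \<Rightarrow> 'r) \<Rightarrow> ('m \<Rightarrow> 'r)" where
  "dual_act rc rho h f = (\<lambda>m. \<Sum>(c, n)\<leftarrow>rho m. f (rc c (h n)))"

definition dual_ract :: "('m \<Rightarrow> 'r::ring_1) \<Rightarrow> 'r \<Rightarrow> ('m \<Rightarrow> 'r)" where
  "dual_ract h r = (\<lambda>m. h m * r)"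

text \<open>Rational right *C-module X (with right R-action ract): every x has some
  sum_i x_i tensor c_i in X tensor_R C with x.f = sum_i x_i f(c_i) for all f in *C.\<close>
definition rational :: "'x::monoid_add set \<Rightarrow> ('x \<Rightarrow> ('c \<Rightarrow> 'r) \<Rightarrow> 'x) \<Rightarrow> ('x \<Rightarrow> 'r \<Rightarrow> 'x)
    \<Rightarrow> ('c \<Rightarrow> 'r) set \<Rightarrow> bool" where
  "rational X act ract Cstar \<longleftrightarrow>
     (\<forall>x\<in>X. \<exists>xs. set xs \<subseteq> X \<times> UNIV \<and> (\<forall>f\<in>Cstar. act x f = (\<Sum>(y, c)\<leftarrow>xs. ract y (f c))))"

definition fin_gen :: "('r::ring_1 \<Rightarrow> 'm::ab_group_add \<Rightarrow> 'm) \<Rightarrow> bool" where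
  "fin_gen lm \<longleftrightarrow> (\<exists>es. \<forall>x. \<exists>rs. length rs = length es \<and> x = (\<Sum>(r, e)\<leftarrow>zip rs es. lm r e))"

text \<open>Finitely generated projective (dual basis lemma).\<close>
definition fg_projective :: "('r::ring_1 \<Rightarrow> 'm::ab_group_add \<Rightarrow> 'm) \<Rightarrow> bool" where
  "fg_projective lm \<longleftrightarrow> (\<exists>ps. (\<forall>(e, f)\<in>set ps. f \<in> ldual lm)
      \<and> (\<forall>x. x = (\<Sum>(e, f)\<leftarrow>ps. lm (f x) e)))"

text \<open>Locally projective (Zimmermann-Huisgen; finite dual-basis characterization).\<close>
definition locally_projective :: "('r::ring_1 \<Rightarrow> 'm::ab_group_add \<Rightarrow> 'm) \<Rightarrow> bool" where
  "locally_projective lm \<longleftrightarrow> (\<forall>F. finite F \<longrightarrow> (\<exists>ps. (\<forall>(e, f)\<in>set ps. f \<in> ldual lm)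
      \<and> (\<forall>x\<in>F. x = (\<Sum>(e, f)\<leftarrow>ps. lm (f x) e))))"

end

theory Submission
  imports Defs
begin

text \<open>
  For \<open>h \<in> *M\<close> and a dual basis \<open>(e_k, g_k)\<close> of \<open>M\<close>, linearity of \<open>h\<cdot>f\<close> gives
  \<open>(h\<cdot>f)(m) = \<Sum>_k g_k(m) f(c_k)\<close> with \<open>c_k = e_k[-1] h(e_k[0])\<close> independent of \<open>f\<close>;
  this is rationality of \<open>*M\<close>.

  Conversely, let \<open>i : M \<rightarrow> C\<close> be the inclusion of a comodule summand, with \<open>R\<close>-linear
  retraction \<open>p\<close>. By the counit law \<open>h = \<epsilon> \<circ> i \<in> *M\<close> satisfies \<open>(h\<cdot>f)(m) = f(i m)\<close>, so
  rationality of \<open>h\<close> gives \<open>f(i m) = \<Sum>_k y_k(m) f(c_k)\<close> for all \<open>f \<in> *C\<close>. As \<open>*C\<close> separates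
  the points of the locally projective module \<open>C\<close>, \<open>i m = \<Sum>_k y_k(m) c_k\<close> and the \<open>p(c_k)\<close>
  generate \<open>M\<close>. Finally, a finitely generated retract of a locally projective module is
  finitely generated projective, so (i) gives the converse.
\<close>

definition lmod_hom :: "('r::ring_1 \<Rightarrow> 'a::ab_group_add \<Rightarrow> 'a) \<Rightarrow> ('r \<Rightarrow> 'b::ab_group_add \<Rightarrow> 'b)
    \<Rightarrow> ('a \<Rightarrow> 'b) \<Rightarrow> bool" where
  "lmod_hom la lb g \<longleftrightarrow> (\<forall>x y. g (x + y) = g x + g y) \<and> (\<forall>r x. g (la r x) = lb r (g x))"

definition balanced :: "('a::ab_group_add \<Rightarrow> 'r::ring_1 \<Rightarrow> 'a) \<Rightarrow> ('r \<Rightarrow> 'b::ab_group_add \<Rightarrow> 'b)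
    \<Rightarrow> ('a \<times> 'b \<Rightarrow> 'v::ab_group_add) \<Rightarrow> bool" where
  "balanced ra lb \<phi> \<longleftrightarrow> (\<forall>a a' b. \<phi> (a + a', b) = \<phi> (a, b) + \<phi> (a', b))
     \<and> (\<forall>a b b'. \<phi> (a, b + b') = \<phi> (a, b) + \<phi> (a, b'))
     \<and> (\<forall>a r b. \<phi> (ra a r, b) = \<phi> (a, lb r b))"

lemma ldual_iff_lmod_hom: "h \<in> ldual lm \<longleftrightarrow> lmod_hom lm (*) h"
  by (simp add: ldual_def lmod_hom_def)

lemma lmod_hom_add: "lmod_hom la lb g \<Longrightarrow> g (x + y) = g x + g y"
  by (simp add: lmod_hom_def)

lemma lmod_hom_scale: "lmod_hom la lb g \<Longrightarrow> g (la r x) = lb r (g x)"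
  by (simp add: lmod_hom_def)

lemma additive_zero:
  fixes g :: "'a::ab_group_add \<Rightarrow> 'b::ab_group_add"
  assumes "\<And>x y. g (x + y) = g x + g y"
  shows "g 0 = 0"
  using assms[of 0 0] by simp

lemma additive_diff:
  fixes g :: "'a::ab_group_add \<Rightarrow> 'b::ab_group_add"
  assumes "\<And>x y. g (x + y) = g x + g y"
  shows "g (x - y) = g x - g y"
  using assms[of "x - y" y] by (simp add: algebra_simps)

lemma additive_sum_list:
  fixes g :: "'a::ab_group_add \<Rightarrow> 'b::ab_group_add"
  assumes "\<And>x y. g (x + y) = g x + g y"
  shows "g (\<Sum>x\<leftarrow>xs. f x) = (\<Sum>x\<leftarrow>xs. g (f x))"
  by (induction xs) (simp_all add: assms additive_zero[OF assms])

lemma lmod_scale_zero: "lmod lm \<Longrightarrow> lm 0 x = 0"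
  using additive_zero[of "\<lambda>r. lm r x"] by (simp add: lmod_def)

lemma sum_list_fun_apply:
  "(\<Sum>x\<leftarrow>xs. f x :: 'a \<Rightarrow> 'b::monoid_add) m = (\<Sum>x\<leftarrow>xs. f x m)"
  by (induction xs) simp_all

lemma sum_of_int_fsum:
  assumes "finite S" "set xs \<subseteq> S"
  shows "(\<Sum>q\<in>S. of_int (fsum xs q) * g q) = (\<Sum>p\<leftarrow>xs. g p :: 'v::ring_1)"
  using assms(2)
proof (induction xs)
  case Nil
  then show ?case by (simp add: fsum_def)
next
  case (Cons x xs)
  have "(\<Sum>q\<in>S. of_int (delta x q) * g q) = (\<Sum>q\<in>S. if q = x then g q else 0)"
    by (rule sum.cong) (auto simp: delta_def)
  with Cons assms(1) show ?case
    by (simp add: fsum_def distrib_right sum.distrib)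
qed

lemma tker_balanced_sum_zero:
  fixes \<phi> :: "'a::ab_group_add \<times> 'b::ab_group_add \<Rightarrow> 'v::ring_1"
  assumes "k \<in> tker ra lb" and bal: "balanced ra lb \<phi>"
  shows "\<exists>T. finite T \<and> {q. k q \<noteq> 0} \<subseteq> T \<and>
     (\<forall>S. finite S \<longrightarrow> T \<subseteq> S \<longrightarrow> (\<Sum>q\<in>S. of_int (k q) * \<phi> q) = 0)"
  using assms(1)
proof (induction rule: tker.induct)
  note sum_diff = left_diff_distrib of_int_diff sum_subtractf
  have sum_delta: "(\<Sum>q\<in>S. of_int (delta p q) * \<phi> q) = \<phi> p" if "finite S" "p \<in> S" for S p
    using sum_of_int_fsum[of S "[p]" \<phi>] that by (simp add: fsum_def)
  {
    case tk_zero
    then show ?case by (intro exI[of _ "{}"]) auto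
  next
    case (tk_addl a a' b)
    show ?case
      by (rule exI[of _ "{(a + a', b), (a, b), (a', b)}"])
        (use bal in \<open>auto simp: sum_diff sum_delta balanced_def; auto simp: delta_def split: if_splits\<close>)
  next
    case (tk_addr a b b')
    show ?case
      by (rule exI[of _ "{(a, b + b'), (a, b), (a, b')}"])
        (use bal in \<open>auto simp: sum_diff sum_delta balanced_def; auto simp: delta_def split: if_splits\<close>)
  next
    case (tk_bal a r b)
    show ?case
      by (rule exI[of _ "{(ra a r, b), (a, lb r b)}"])
        (use bal in \<open>auto simp: sum_diff sum_delta balanced_def; auto simp: delta_def split: if_splits\<close>)
  next
    case (tk_diff x y)
    then obtain Tx Ty where "finite Tx" "{q. x q \<noteq> 0} \<subseteq> Tx"
       "\<forall>S. finite S \<longrightarrow> Tx \<subseteq> S \<longrightarrow> (\<Sum>q\<in>S. of_int (x q) * \<phi> q) = 0"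
       and "finite Ty" "{q. y q \<noteq> 0} \<subseteq> Ty"
       "\<forall>S. finite S \<longrightarrow> Ty \<subseteq> S \<longrightarrow> (\<Sum>q\<in>S. of_int (y q) * \<phi> q) = 0"
      by blast
    then show ?case
      by (intro exI[of _ "Tx \<union> Ty"]) (auto simp: sum_diff; force)
  }
qed

lemma teq_balanced_sum_eq:
  fixes \<phi> :: "'a::ab_group_add \<times> 'b::ab_group_add \<Rightarrow> 'v::ring_1"
  assumes "teq ra lb xs ys" and "balanced ra lb \<phi>"
  shows "(\<Sum>p\<leftarrow>xs. \<phi> p) = (\<Sum>p\<leftarrow>ys. \<phi> p)"
proof -
  obtain T where T: "finite T" "\<forall>S. finite S \<longrightarrow> T \<subseteq> S \<longrightarrow>
       (\<Sum>q\<in>S. of_int (fsum xs q - fsum ys q) * \<phi> q) = 0"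
    using tker_balanced_sum_zero[OF assms(1)[unfolded teq_def] assms(2)] by blast
  let ?S = "T \<union> set xs \<union> set ys"
  have "0 = (\<Sum>q\<in>?S. of_int (fsum xs q - fsum ys q) * \<phi> q)"
    by (rule T(2)[rule_format, symmetric]) (auto simp: T(1))
  also have "\<dots> = (\<Sum>q\<in>?S. of_int (fsum xs q) * \<phi> q) - (\<Sum>q\<in>?S. of_int (fsum ys q) * \<phi> q)"
    by (simp add: left_diff_distrib sum_subtractf)
  also have "\<dots> = (\<Sum>p\<leftarrow>xs. \<phi> p) - (\<Sum>p\<leftarrow>ys. \<phi> p)"
    using T(1) by (subst (1 2) sum_of_int_fsum) auto
  finally show ?thesis by simp
qed

lemma ldual_dual_basis_expansion:
  assumes "\<forall>x. x = (\<Sum>(e, g)\<leftarrow>ps. lm (g x) e)" and "\<Psi> \<in> ldual lm"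
  shows "\<Psi> m = (\<Sum>(e, g)\<leftarrow>ps. g m * \<Psi> e)"
proof -
  have "\<Psi> m = \<Psi> (\<Sum>(e, g)\<leftarrow>ps. lm (g m) e)"
    using assms(1) by metis
  also have "\<dots> = (\<Sum>(e, g)\<leftarrow>ps. g m * \<Psi> e)"
    using assms(2) unfolding ldual_iff_lmod_hom
    by (simp add: additive_sum_list[OF lmod_hom_add] lmod_hom_scale case_prod_unfold)
  finally show ?thesis .
qed

lemma dual_act_in_ldual:
  assumes cor: "coring lc rc Delta eps" and com: "left_comodule lc rc Delta eps lm rho"
    and h: "h \<in> ldual lm" and f: "f \<in> ldual lc"
  shows "dual_act rc rho h f \<in> ldual lm"
proof -
  have rc: "rmod rc" and comm: "\<And>r s x. lc r (rc x s) = rc (lc r x) s"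
    using cor by (auto simp: coring_def bimod_def)
  have h: "lmod_hom lm (*) h" and f: "lmod_hom lc (*) f"
    using h f by (simp_all add: ldual_iff_lmod_hom)
  define \<phi> where "\<phi> = (\<lambda>(c, n). f (rc c (h n)))"
  have bal: "balanced rc lm \<phi>"
    using rc f h by (simp add: balanced_def \<phi>_def rmod_def lmod_hom_def)
  have scale: "(\<Sum>p\<leftarrow>map (\<lambda>(c, m). (lc r c, m)) xs. \<phi> p) = r * (\<Sum>p\<leftarrow>xs. \<phi> p)" for r xs
    by (induction xs) (auto simp: \<phi>_def comm[symmetric] lmod_hom_scale[OF f] distrib_left)
  have act: "dual_act rc rho h f m = (\<Sum>p\<leftarrow>rho m. \<phi> p)" for m
    by (simp add: dual_act_def \<phi>_def)
  have rho_add: "teq rc lm (rho (x + y)) (rho x @ rho y)"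
    and rho_scale: "teq rc lm (rho (lm r x)) (map (\<lambda>(c, m). (lc r c, m)) (rho x))" for x y r
    using com by (auto simp: left_comodule_def)
  show ?thesis
    unfolding ldual_def act
    using teq_balanced_sum_eq[OF rho_add bal] teq_balanced_sum_eq[OF rho_scale bal] scale by simp
qed

lemma rational_ldual_if_fg_projective:
  assumes cor: "coring lc rc Delta eps" and com: "left_comodule lc rc Delta eps lm rho"
    and fg: "fg_projective lm"
  shows "rational (ldual lm) (dual_act rc rho) dual_ract (ldual lc)"
  unfolding rational_def
proof
  fix h assume h: "h \<in> ldual lm"
  obtain ps where ps: "\<forall>(e, g)\<in>set ps. g \<in> ldual lm" "\<forall>x. x = (\<Sum>(e, g)\<leftarrow>ps. lm (g x) e)"
    using fg unfolding fg_projective_def by blast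
  define xs where "xs = map (\<lambda>(e, g). (g, \<Sum>(c, n)\<leftarrow>rho e. rc c (h n))) ps"
  show "\<exists>xs. set xs \<subseteq> ldual lm \<times> UNIV \<and>
      (\<forall>f\<in>ldual lc. dual_act rc rho h f = (\<Sum>(y, c)\<leftarrow>xs. dual_ract y (f c)))"
  proof (intro exI[of _ xs] conjI ballI ext)
    show "set xs \<subseteq> ldual lm \<times> UNIV"
      using ps(1) by (auto simp: xs_def)
    fix f m assume f: "f \<in> ldual lc"
    have "dual_act rc rho h f m = (\<Sum>(e, g)\<leftarrow>ps. g m * dual_act rc rho h f e)"
      by (rule ldual_dual_basis_expansion[OF ps(2) dual_act_in_ldual[OF cor com h f]])
    also have "\<dots> = (\<Sum>(y, c)\<leftarrow>xs. dual_ract y (f c)) m"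
      using f unfolding ldual_iff_lmod_hom
      by (simp add: xs_def sum_list_fun_apply dual_ract_def dual_act_def case_prod_unfold
          additive_sum_list[OF lmod_hom_add])
    finally show "dual_act rc rho h f m = (\<Sum>(y, c)\<leftarrow>xs. dual_ract y (f c)) m" .
  qed
qed

lemma direct_summand_retraction:
  assumes "lmod lc" and i: "lmod_hom lm lc i" and j: "lmod_hom ln lc j"
    and bij: "bij (\<lambda>(m, n). i m + j n)"
  obtains p where "lmod_hom lc lm p" and "\<And>m. p (i m) = m"
proof
  define F where "F = (\<lambda>(m, n). i m + j n)"
  define p where "p c = fst (inv F c)" for c
  define q where "q c = snd (inv F c)" for c
  have decomp: "i (p c) + j (q c) = c" for c
    using bij surj_f_inv_f[OF bij_is_surj, of F c] by (simp add: F_def p_def q_def case_prod_unfold)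
  have p_eq: "p (i m + j n) = m" for m n
    using bij inv_f_f[OF bij_is_inj, of F "(m, n)"] by (simp add: F_def p_def)
  show "p (i m) = m" for m
    using p_eq[of m 0] additive_zero[OF lmod_hom_add[OF j]] by simp
  have "p (x + y) = p x + p y" for x y
  proof -
    have "x + y = i (p x + p y) + j (q x + q y)"
      by (simp add: lmod_hom_add[OF i] lmod_hom_add[OF j] decomp add.commute add.left_commute)
    then show ?thesis by (metis p_eq)
  qed
  moreover have "p (lc r c) = lm r (p c)" for r c
  proof -
    have "lc r c = lc r (i (p c) + j (q c))"
      by (simp add: decomp)
    also have "\<dots> = i (lm r (p c)) + j (ln r (q c))"
      using \<open>lmod lc\<close> by (simp add: lmod_def lmod_hom_scale[OF i] lmod_hom_scale[OF j])
    finally show ?thesis by (metis p_eq)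
  qed
  ultimately show "lmod_hom lc lm p"
    by (simp add: lmod_hom_def)
qed

lemma ldual_separates_if_locally_projective:
  assumes "lmod lc" and "locally_projective lc" and zero: "\<And>f. f \<in> ldual lc \<Longrightarrow> f d = 0"
  shows "d = 0"
proof -
  obtain ps where ps: "\<forall>(e, f)\<in>set ps. f \<in> ldual lc" "d = (\<Sum>(e, f)\<leftarrow>ps. lc (f d) e)"
    using assms(2) unfolding locally_projective_def by (metis finite.emptyI finite.insertI insertI1)
  have "lc (f d) e = 0" if "(e, f) \<in> set ps" for e f
    using ps(1) that zero lmod_scale_zero[OF assms(1)] by fastforce
  then have "(\<Sum>(e, f)\<leftarrow>ps. lc (f d) e) = (\<Sum>_\<leftarrow>ps. 0)"
    by (intro arg_cong[of _ _ sum_list] map_cong) auto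
  with ps(2) show ?thesis by simp
qed

lemma dual_act_counit_comp:
  assumes cor: "coring lc rc Delta eps" and i: "comodule_map_to_C lc rc Delta lm rho i"
    and f: "f \<in> ldual lc"
  shows "dual_act rc rho (\<lambda>m. eps (i m)) f m = f (i m)"
proof -
  have rc: "rmod rc" and eps_add: "\<And>x y. eps (x + y) = eps x + eps y"
    and eps_scale: "\<And>r x. eps (lc r x) = r * eps x"
    and counit: "\<And>x. (\<Sum>(a, b)\<leftarrow>Delta x. rc a (eps b)) = x"
    using cor by (auto simp: coring_def bimod_def)
  have i_co: "teq rc lc (Delta (i m)) (map (\<lambda>(c, m). (c, i m)) (rho m))"
    using i by (simp add: comodule_map_to_C_def)
  have f: "lmod_hom lc (*) f"
    using f by (simp add: ldual_iff_lmod_hom)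
  define \<phi> where "\<phi> = (\<lambda>(a, b). f (rc a (eps b)))"
  have bal: "balanced rc lc \<phi>"
    using rc f by (simp add: balanced_def \<phi>_def rmod_def lmod_hom_def eps_add eps_scale)
  have "dual_act rc rho (\<lambda>m. eps (i m)) f m = (\<Sum>p\<leftarrow>map (\<lambda>(c, m). (c, i m)) (rho m). \<phi> p)"
    by (simp add: dual_act_def \<phi>_def case_prod_unfold o_def)
  also have "\<dots> = (\<Sum>p\<leftarrow>Delta (i m). \<phi> p)"
    using teq_balanced_sum_eq[OF i_co bal] by simp
  also have "\<dots> = f (\<Sum>(a, b)\<leftarrow>Delta (i m). rc a (eps b))"
    by (simp add: additive_sum_list[OF lmod_hom_add[OF f]] \<phi>_def case_prod_unfold)
  also have "\<dots> = f (i m)"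
    by (simp add: counit)
  finally show ?thesis .
qed

lemma image_in_span_if_rational:
  assumes cor: "coring lc rc Delta eps" and "locally_projective lc"
    and i: "comodule_map_to_C lc rc Delta lm rho i"
    and rat: "rational (ldual lm) (dual_act rc rho) dual_ract (ldual lc)"
  obtains xs where "\<And>m. i m = (\<Sum>(y, c)\<leftarrow>xs. lc (y m) c)"
proof -
  have lc: "lmod lc" and eps_add: "\<And>x y. eps (x + y) = eps x + eps y"
    and eps_scale: "\<And>r x. eps (lc r x) = r * eps x"
    using cor by (auto simp: coring_def bimod_def)
  have "(\<lambda>m. eps (i m)) \<in> ldual lm"
    using i by (simp add: ldual_def comodule_map_to_C_def eps_add eps_scale)
  then obtain xs where xs: "\<forall>f\<in>ldual lc. dual_act rc rho (\<lambda>m. eps (i m)) f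
      = (\<Sum>(y, c)\<leftarrow>xs. dual_ract y (f c))"
    using rat unfolding rational_def by blast
  have "f (i m - (\<Sum>(y, c)\<leftarrow>xs. lc (y m) c)) = 0" if f: "f \<in> ldual lc" for f m
  proof -
    have "f (i m) = (\<Sum>(y, c)\<leftarrow>xs. y m * f c)"
      using dual_act_counit_comp[OF cor i f, of m, symmetric] xs f
      by (simp add: sum_list_fun_apply dual_ract_def case_prod_unfold)
    then show ?thesis
      using f unfolding ldual_iff_lmod_hom
      by (simp add: additive_diff[OF lmod_hom_add] additive_sum_list[OF lmod_hom_add]
          lmod_hom_scale case_prod_unfold)
  qed
  then show ?thesis
    using that ldual_separates_if_locally_projective[OF lc \<open>locally_projective lc\<close>] by force
qed

lemma fin_gen_if_retract_image_in_span:
  assumes p: "lmod_hom lc lm p" and pi: "\<And>m. p (i m) = m"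
    and span: "\<And>m. i m = (\<Sum>(y, c)\<leftarrow>xs. lc (y m) c)"
  shows "fin_gen lm"
  unfolding fin_gen_def
proof (intro exI[of _ "map (\<lambda>(y, c). p c) xs"] allI)
  fix m
  have "m = (\<Sum>(y, c)\<leftarrow>xs. lm (y m) (p c))"
    using pi[of m] span[of m]
    by (simp add: additive_sum_list[OF lmod_hom_add[OF p]] lmod_hom_scale[OF p] case_prod_unfold)
  also have "\<dots> = (\<Sum>(r, e)\<leftarrow>zip (map (\<lambda>(y, c). y m) xs) (map (\<lambda>(y, c). p c) xs). lm r e)"
    by (induction xs) auto
  finally show "\<exists>rs. length rs = length (map (\<lambda>(y, c). p c) xs) \<and>
      m = (\<Sum>(r, e)\<leftarrow>zip rs (map (\<lambda>(y, c). p c) xs). lm r e)"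
    by (intro exI[of _ "map (\<lambda>(y, c). y m) xs"]) simp
qed

text \<open>Local projectivity provides a dual-basis map \<open>G\<close> fixing the images of the finitely many
  generators, hence fixing all of \<open>i(M)\<close>; composing with \<open>p\<close> gives a dual basis of \<open>M\<close>.\<close>

lemma fg_projective_if_fin_gen_retract:
  assumes lc: "lmod lc" and "locally_projective lc" and "fin_gen lm"
    and i: "lmod_hom lm lc i" and p: "lmod_hom lc lm p" and pi: "\<And>m. p (i m) = m"
  shows "fg_projective lm"
proof -
  obtain es where es: "\<forall>x. \<exists>rs. length rs = length es \<and> x = (\<Sum>(r, e)\<leftarrow>zip rs es. lm r e)"
    using \<open>fin_gen lm\<close> unfolding fin_gen_def by blast
  obtain ps where ps: "\<forall>(e, g)\<in>set ps. g \<in> ldual lc"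
      "\<forall>x\<in>i ` set es. x = (\<Sum>(e, g)\<leftarrow>ps. lc (g x) e)"
    using \<open>locally_projective lc\<close> unfolding locally_projective_def by blast
  define G where "G x = (\<Sum>(e, g)\<leftarrow>ps. lc (g x) e)" for x
  have lc_add: "lc r (x + y) = lc r x + lc r y" for r x y
    using lc by (simp add: lmod_def)
  have G: "lmod_hom lc lc G"
  proof -
    have "G (x + y) = (\<Sum>(e, g)\<leftarrow>ps. lc (g x) e + lc (g y) e)"
      and "G (lc r x) = (\<Sum>(e, g)\<leftarrow>ps. lc r (lc (g x) e))" for x y r
      unfolding G_def using ps(1) lc
      by (auto simp: ldual_def lmod_def intro!: arg_cong[of _ _ sum_list] map_cong)
    then show ?thesis
      by (simp add: lmod_hom_def G_def sum_list_addf case_prod_unfold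
          additive_sum_list[of "lc _", OF lc_add])
  qed
  have Gi: "G (i m) = i m" for m
  proof -
    obtain rs where rs: "m = (\<Sum>(r, e)\<leftarrow>zip rs es. lm r e)"
      using es by blast
    have im: "i m = (\<Sum>(r, e)\<leftarrow>zip rs es. lc r (i e))"
      by (subst rs) (simp add: additive_sum_list[OF lmod_hom_add[OF i]] lmod_hom_scale[OF i]
          case_prod_unfold)
    have "G (i m) = (\<Sum>(r, e)\<leftarrow>zip rs es. lc r (G (i e)))"
      by (subst im) (simp add: additive_sum_list[OF lmod_hom_add[OF G]] lmod_hom_scale[OF G]
          case_prod_unfold)
    also have "\<dots> = (\<Sum>(r, e)\<leftarrow>zip rs es. lc r (i e))"
      using ps(2) by (intro arg_cong[of _ _ sum_list] map_cong) (auto simp: G_def dest!: set_zip_rightD)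
    finally show ?thesis
      using im by simp
  qed
  show ?thesis
    unfolding fg_projective_def
  proof (intro exI[of _ "map (\<lambda>(e, g). (p e, \<lambda>x. g (i x))) ps"] conjI allI)
    show "\<forall>(e, f)\<in>set (map (\<lambda>(e, g). (p e, \<lambda>x. g (i x))) ps). f \<in> ldual lm"
      using ps(1) i by (auto simp: ldual_def lmod_hom_def)
    fix x
    have "x = p (G (i x))"
      by (simp add: Gi pi)
    also have "\<dots> = (\<Sum>(e, g)\<leftarrow>ps. lm (g (i x)) (p e))"
      by (simp add: G_def additive_sum_list[OF lmod_hom_add[OF p]] lmod_hom_scale[OF p] case_prod_unfold)
    finally show "x = (\<Sum>(e, f)\<leftarrow>map (\<lambda>(e, g). (p e, \<lambda>x. g (i x))) ps. lm (f x) e)"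
      by (simp add: case_prod_unfold o_def)
  qed
qed

lemma comodule_map_to_C_lmod_hom:
  "comodule_map_to_C lc rc Delta lm rho i \<Longrightarrow> lmod_hom lm lc i"
  by (simp add: comodule_map_to_C_def lmod_hom_def)

theorem lemma2p5:
  fixes lc :: "'r::ring_1 \<Rightarrow> 'c::ab_group_add \<Rightarrow> 'c" and rc :: "'c \<Rightarrow> 'r \<Rightarrow> 'c"
    and Delta :: "'c \<Rightarrow> ('c \<times> 'c) list" and eps :: "'c \<Rightarrow> 'r"
  assumes coring: "coring lc rc Delta eps"
    and alpha: "locally_projective lc"
  shows "(\<forall>(lm :: 'r \<Rightarrow> 'm::ab_group_add \<Rightarrow> 'm) rho.
            left_comodule lc rc Delta eps lm rho \<and> fg_projective lm
            \<longrightarrow> rational (ldual lm) (dual_act rc rho) dual_ract (ldual lc))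
       \<and> (\<forall>(lm :: 'r \<Rightarrow> 'm2::ab_group_add \<Rightarrow> 'm2) rhoM (ln :: 'r \<Rightarrow> 'n::ab_group_add \<Rightarrow> 'n) rhoN i j.
            left_comodule lc rc Delta eps lm rhoM \<and> left_comodule lc rc Delta eps ln rhoN
            \<and> comodule_map_to_C lc rc Delta lm rhoM i \<and> comodule_map_to_C lc rc Delta ln rhoN j
            \<and> bij (\<lambda>(m, n). i m + j n)
            \<longrightarrow> (rational (ldual lm) (dual_act rc rhoM) dual_ract (ldual lc) \<longleftrightarrow> fin_gen lm))"
proof (intro conjI allI impI)
  fix lm :: "'r \<Rightarrow> 'm \<Rightarrow> 'm" and rho
  assume "left_comodule lc rc Delta eps lm rho \<and> fg_projective lm"
  then show "rational (ldual lm) (dual_act rc rho) dual_ract (ldual lc)"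
    using rational_ldual_if_fg_projective[OF coring] by blast
next
  fix lm :: "'r \<Rightarrow> 'm2 \<Rightarrow> 'm2" and rhoM and ln :: "'r \<Rightarrow> 'n \<Rightarrow> 'n" and rhoN i j
  assume "left_comodule lc rc Delta eps lm rhoM \<and> left_comodule lc rc Delta eps ln rhoN
            \<and> comodule_map_to_C lc rc Delta lm rhoM i \<and> comodule_map_to_C lc rc Delta ln rhoN j
            \<and> bij (\<lambda>(m, n). i m + j n)"
  then have comM: "left_comodule lc rc Delta eps lm rhoM" and iC: "comodule_map_to_C lc rc Delta lm rhoM i"
    and i: "lmod_hom lm lc i" and j: "lmod_hom ln lc j" and bij: "bij (\<lambda>(m, n). i m + j n)"
    by (auto intro: comodule_map_to_C_lmod_hom)
  have lc: "lmod lc"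
    using coring by (simp add: coring_def bimod_def)
  obtain p where p: "lmod_hom lc lm p" and pi: "\<And>m. p (i m) = m"
    using direct_summand_retraction[OF lc i j bij] by blast
  show "rational (ldual lm) (dual_act rc rhoM) dual_ract (ldual lc) \<longleftrightarrow> fin_gen lm"
  proof
    assume "rational (ldual lm) (dual_act rc rhoM) dual_ract (ldual lc)"
    then show "fin_gen lm"
      using image_in_span_if_rational[OF coring alpha iC] fin_gen_if_retract_image_in_span[OF p pi]
      by metis
  next
    assume "fin_gen lm"
    then show "rational (ldual lm) (dual_act rc rhoM) dual_ract (ldual lc)"
      using fg_projective_if_fin_gen_retract[OF lc alpha _ i p pi]
        rational_ldual_if_fg_projective[OF coring comM] by blast
  qed
qed

end
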